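(* Let $(X,d)$ be a quasi-pseudometric space and $f:X\to\mathbb{R}\cup\{\infty\}$ a function. 1. $f$ is nearly lower semicontinuous at $x\in X$ if and only if $f(x)\le\liminf_{n\to\infty}f(x_n)$ holds for every sequence $(x_n)$ in $X$ which has no constant subsequence and converges to $x$. 2. $f$ is lower semicontinuous on $X$ if and only if it is nearly lower semicontinuous on $X$ and $d$-monotone. 3. If the topology $\tau_d$ is $T_1$, then every nearly lower semicontinuous function $f:X\to\mathbb{R}\cup\{\infty\}$ is lower semicontinuous.
   Context: A quasi-pseudometric on a set $X$ is a map $d:X\times X\to[0,\infty)$ with $d(x,x)=0$ and $d(x,z)\le d(x,y)+d(y,z)$ for all $x,y,z$ (symmetry is not assumed). The topology $\tau_d$ has as neighbourhood base at $x$ the balls $B_d(x,r)=\{y: d(x,y)<r\}$, $r>0$; thus $x_n\to x$ iff $d(x,x_n)\to0$. All topological notions refer to $\tau_d$. A function $f:X\to\mathbb{R}\cup\{\infty\}$ is lower semicontinuous (lsc) at $x$ if $f(x)\le\liminf_n f(x_n)$ for every sequence $x_n\to x$; nearly lsc at $x$ if this inequality holds for every sequence with pairwise distinct terms converging to $x$; lsc (nearly lsc) on $X$ if it is so at every point. $f$ is $d$-monotone if $d(x,y)=0$ implies $f(x)\le f(y)$. *)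

theory Defs
  imports "HOL-Analysis.Analysis" "HOL-Library.Extended_Real"
begin

definition quasi_pseudometric :: "'a set \<Rightarrow> ('a \<Rightarrow> 'a \<Rightarrow> real) \<Rightarrow> bool" where
  "quasi_pseudometric X d \<longleftrightarrow>
     (\<forall>x\<in>X. \<forall>y\<in>X. 0 \<le> d x y) \<and> (\<forall>x\<in>X. d x x = 0) \<and>
     (\<forall>x\<in>X. \<forall>y\<in>X. \<forall>z\<in>X. d x z \<le> d x y + d y z)"

definition qball :: "'a set \<Rightarrow> ('a \<Rightarrow> 'a \<Rightarrow> real) \<Rightarrow> 'a \<Rightarrow> real \<Rightarrow> 'a set" where
  "qball X d x r = {y \<in> X. d x y < r}"

definition qtopology :: "'a set \<Rightarrow> ('a \<Rightarrow> 'a \<Rightarrow> real) \<Rightarrow> 'a topology" where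
  "qtopology X d = topology (\<lambda>U. U \<subseteq> X \<and> (\<forall>x\<in>U. \<exists>r>0. qball X d x r \<subseteq> U))"

definition qconv :: "('a \<Rightarrow> 'a \<Rightarrow> real) \<Rightarrow> (nat \<Rightarrow> 'a) \<Rightarrow> 'a \<Rightarrow> bool" where
  "qconv d xs x \<longleftrightarrow> (\<lambda>n. d x (xs n)) \<longlonglongrightarrow> 0"

definition lsc_at :: "'a set \<Rightarrow> ('a \<Rightarrow> 'a \<Rightarrow> real) \<Rightarrow> ('a \<Rightarrow> ereal) \<Rightarrow> 'a \<Rightarrow> bool" where
  "lsc_at X d f x \<longleftrightarrow>
     (\<forall>xs. (\<forall>n. xs n \<in> X) \<longrightarrow> qconv d xs x \<longrightarrow> f x \<le> liminf (\<lambda>n. f (xs n)))"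

definition nearly_lsc_at :: "'a set \<Rightarrow> ('a \<Rightarrow> 'a \<Rightarrow> real) \<Rightarrow> ('a \<Rightarrow> ereal) \<Rightarrow> 'a \<Rightarrow> bool" where
  "nearly_lsc_at X d f x \<longleftrightarrow>
     (\<forall>xs. (\<forall>n. xs n \<in> X) \<longrightarrow> inj xs \<longrightarrow> qconv d xs x \<longrightarrow> f x \<le> liminf (\<lambda>n. f (xs n)))"

definition lsc_on :: "'a set \<Rightarrow> ('a \<Rightarrow> 'a \<Rightarrow> real) \<Rightarrow> ('a \<Rightarrow> ereal) \<Rightarrow> bool" where
  "lsc_on X d f \<longleftrightarrow> (\<forall>x\<in>X. lsc_at X d f x)"

definition nearly_lsc_on :: "'a set \<Rightarrow> ('a \<Rightarrow> 'a \<Rightarrow> real) \<Rightarrow> ('a \<Rightarrow> ereal) \<Rightarrow> bool" where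
  "nearly_lsc_on X d f \<longleftrightarrow> (\<forall>x\<in>X. nearly_lsc_at X d f x)"

definition d_monotone :: "'a set \<Rightarrow> ('a \<Rightarrow> 'a \<Rightarrow> real) \<Rightarrow> ('a \<Rightarrow> ereal) \<Rightarrow> bool" where
  "d_monotone X d f \<longleftrightarrow> (\<forall>x\<in>X. \<forall>y\<in>X. d x y = 0 \<longrightarrow> f x \<le> f y)"

definition has_const_subseq :: "(nat \<Rightarrow> 'a) \<Rightarrow> bool" where
  "has_const_subseq xs \<longleftrightarrow> (\<exists>(r::nat \<Rightarrow> nat) (c::'a). strict_mono r \<and> (\<forall>n. xs (r n) = c))"

end

theory Submission imports Defs begin

text \<open>If \<open>liminf f(x\<^sub>n) < f x\<close> along \<open>x\<^sub>n \<rightarrow> x\<close>, choose \<open>y < f x\<close> with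
  \<open>f(x\<^sub>n) \<le> y\<close> for infinitely many n. Among these terms either infinitely many points are
  distinct, giving an injective sequence converging to x on which f stays below y, or a single
  point v recurs infinitely often, which forces \<open>d(x,v) = 0\<close> while \<open>f v < f x\<close>. So near lower
  semicontinuity fails in the first case and d-monotonicity in the second. In a T1 space
  \<open>d(x,v) = 0\<close> implies \<open>v = x\<close>, so d-monotonicity holds trivially.\<close>

lemma filterlim_sequentially_inj:
  fixes r :: "nat \<Rightarrow> nat"
  assumes "inj r"
  shows "filterlim r sequentially sequentially"
  unfolding filterlim_at_top
proof
  fix N
  have "finite {m. r m < N}"
    using finite_vimageI[of "{..<N}" r] assms by (simp add: vimage_def)
  then show "eventually (\<lambda>m. N \<le> r m) sequentially"
    by (simp add: cofinite_eq_sequentially[symmetric] eventually_cofinite not_le)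
qed

lemma liminf_less_imp_infinite_le:
  fixes F :: "nat \<Rightarrow> ereal"
  assumes "liminf F < C"
  obtains y where "y < C" "infinite {n. F n \<le> y}"
proof -
  from assms obtain y where y: "y < C" "\<not> eventually (\<lambda>n. y < F n) sequentially"
    by (metis le_Liminf_iff not_le order.refl)
  then have "infinite {n. \<not> y < F n}"
    by (simp add: cofinite_eq_sequentially[symmetric] eventually_cofinite)
  with y(1) show thesis by (intro that[of y]) (auto simp: not_less)
qed

lemma has_const_subseq_iff_infinite_fiber:
  "has_const_subseq xs \<longleftrightarrow> (\<exists>v. infinite {n. xs n = v})"
proof
  assume "has_const_subseq xs"
  then obtain r :: "nat \<Rightarrow> nat" and v where r: "strict_mono r" "\<forall>n. xs (r n) = v"
    unfolding has_const_subseq_def by blast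
  have "infinite (range r)"
    using r(1) range_inj_infinite strict_mono_imp_inj_on by blast
  moreover have "range r \<subseteq> {n. xs n = v}" using r(2) by auto
  ultimately show "\<exists>v. infinite {n. xs n = v}" by (meson finite_subset)
next
  assume "\<exists>v. infinite {n. xs n = v}"
  then obtain v where "infinite {n. xs n = v}" by blast
  from infinite_enumerate[OF this] show "has_const_subseq xs"
    unfolding has_const_subseq_def by blast
qed

lemma inj_imp_not_has_const_subseq:
  assumes "inj xs"
  shows "\<not> has_const_subseq xs"
proof -
  have "finite {n. xs n = v}" for v
  proof (rule finite_subset)
    show "{n. xs n = v} \<subseteq> {inv xs v}" using assms by auto
  qed simp
  then show ?thesis
    unfolding has_const_subseq_iff_infinite_fiber by blast
qed

lemma inj_subseq_or_infinite_fiber: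
  fixes xs :: "nat \<Rightarrow> 'a"
  assumes "infinite S"
  shows "(\<exists>r :: nat \<Rightarrow> nat. inj r \<and> range r \<subseteq> S \<and> inj (xs \<circ> r))
    \<or> (\<exists>v. infinite {n\<in>S. xs n = v})"
proof (cases "finite (xs ` S)")
  case True
  have "S = (\<Union>v\<in>xs ` S. {n\<in>S. xs n = v})" by auto
  with True assms have "\<exists>v\<in>xs ` S. infinite {n\<in>S. xs n = v}"
    by (metis (no_types, lifting) finite_UN)
  then show ?thesis by blast
next
  case False
  then obtain g :: "nat \<Rightarrow> 'a" where g: "inj g" "range g \<subseteq> xs ` S"
    using infinite_countable_subset by blast
  define r where "r m = (SOME n. n \<in> S \<and> xs n = g m)" for m
  have r: "r m \<in> S \<and> xs (r m) = g m" for m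
  proof -
    have "g m \<in> xs ` S" using g(2) by auto
    then have "\<exists>n. n \<in> S \<and> xs n = g m" by auto
    then show ?thesis unfolding r_def by (rule someI_ex)
  qed
  then have "xs \<circ> r = g" by (simp add: fun_eq_iff)
  with g(1) have "inj (xs \<circ> r)" by simp
  moreover from this have "inj r" by (rule inj_on_imageI2)
  moreover have "range r \<subseteq> S" using r by blast
  ultimately show ?thesis by blast
qed

lemma qconv_reindex:
  assumes "qconv d xs x" "filterlim r sequentially sequentially"
  shows "qconv d (xs \<circ> r) x"
  using filterlim_compose[OF assms[unfolded qconv_def]] by (simp add: qconv_def o_def)

lemma qconv_infinite_fiber_dist_zero:
  assumes "qconv d xs x" "infinite {n. xs n = v}"
  shows "d x v = 0"
proof -
  obtain r :: "nat \<Rightarrow> nat" where r: "strict_mono r" "\<forall>n. xs (r n) = v"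
    using infinite_enumerate[OF assms(2)] by blast
  have "qconv d (xs \<circ> r) x"
    using qconv_reindex[OF assms(1) filterlim_subseq[OF r(1)]] .
  then have "(\<lambda>n. d x v) \<longlonglongrightarrow> 0" using r(2) by (simp add: qconv_def o_def)
  then show ?thesis using LIMSEQ_const_iff by blast
qed

lemma nearly_lsc_at_le_liminf:
  assumes nearly: "nearly_lsc_at X d f x"
    and xs: "\<forall>n. xs n \<in> X" "qconv d xs x"
    and fiber: "\<And>v. infinite {n. xs n = v} \<Longrightarrow> f x \<le> f v"
  shows "f x \<le> liminf (\<lambda>n. f (xs n))"
proof (rule ccontr)
  assume "\<not> ?thesis"
  then have "liminf (\<lambda>n. f (xs n)) < f x" by simp
  then obtain y where y: "y < f x" and S: "infinite {n. f (xs n) \<le> y}"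
    by (rule liminf_less_imp_infinite_le)
  from inj_subseq_or_infinite_fiber[OF S, of xs] show False
  proof
    assume "\<exists>r :: nat \<Rightarrow> nat. inj r \<and> range r \<subseteq> {n. f (xs n) \<le> y} \<and> inj (xs \<circ> r)"
    then obtain r :: "nat \<Rightarrow> nat"
      where r: "inj r" "range r \<subseteq> {n. f (xs n) \<le> y}" "inj (xs \<circ> r)"
      by blast
    have "qconv d (xs \<circ> r) x"
      using qconv_reindex[OF xs(2) filterlim_sequentially_inj[OF r(1)]] .
    with nearly[unfolded nearly_lsc_at_def, rule_format, of "xs \<circ> r"] xs(1) r(3)
    have "f x \<le> liminf (\<lambda>n. f ((xs \<circ> r) n))" by simp
    also have "\<dots> \<le> y"
      using r(2) by (intro Liminf_le always_eventually) auto
    finally show False using y by simp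
  next
    assume "\<exists>v. infinite {n \<in> {n. f (xs n) \<le> y}. xs n = v}"
    then obtain v where v: "infinite {n \<in> {n. f (xs n) \<le> y}. xs n = v}" by blast
    from not_finite_existsD[OF v] obtain n where n: "f (xs n) \<le> y" "xs n = v" by blast
    have "infinite {n. xs n = v}"
      using v by (rule infinite_super[rotated]) auto
    then have "f x \<le> f v" by (rule fiber)
    with n y show False by simp
  qed
qed

lemma lsc_at_iff_nearly_lsc_at:
  "lsc_at X d f x \<longleftrightarrow> nearly_lsc_at X d f x \<and> (\<forall>y\<in>X. d x y = 0 \<longrightarrow> f x \<le> f y)"
proof
  assume lsc: "lsc_at X d f x"
  have "f x \<le> f y" if "y \<in> X" "d x y = 0" for y
  proof -
    have "qconv d (\<lambda>n. y) x" using that by (simp add: qconv_def)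
    with lsc[unfolded lsc_at_def, rule_format, of "\<lambda>n. y"] that
    have "f x \<le> liminf (\<lambda>n. f y)" by simp
    then show ?thesis by (simp add: Liminf_const)
  qed
  with lsc show "nearly_lsc_at X d f x \<and> (\<forall>y\<in>X. d x y = 0 \<longrightarrow> f x \<le> f y)"
    unfolding lsc_at_def nearly_lsc_at_def by blast
next
  assume "nearly_lsc_at X d f x \<and> (\<forall>y\<in>X. d x y = 0 \<longrightarrow> f x \<le> f y)"
  then have nearly: "nearly_lsc_at X d f x" and mono: "\<forall>y\<in>X. d x y = 0 \<longrightarrow> f x \<le> f y"
    by blast+
  show "lsc_at X d f x"
    unfolding lsc_at_def
  proof (intro allI impI)
    fix xs assume xs: "\<forall>n. xs n \<in> X" "qconv d xs x"
    have "f x \<le> f v" if "infinite {n. xs n = v}" for v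
    proof -
      from not_finite_existsD[OF that] obtain n where "xs n = v" by blast
      with xs(1) have "v \<in> X" by blast
      with mono qconv_infinite_fiber_dist_zero[OF xs(2) that] show ?thesis by blast
    qed
    with nearly xs show "f x \<le> liminf (\<lambda>n. f (xs n))"
      by (rule nearly_lsc_at_le_liminf)
  qed
qed

lemma openin_qtopology:
  "openin (qtopology X d) U \<longleftrightarrow> U \<subseteq> X \<and> (\<forall>x\<in>U. \<exists>r>0. qball X d x r \<subseteq> U)"
proof -
  have "istopology (\<lambda>U. U \<subseteq> X \<and> (\<forall>x\<in>U. \<exists>r>0. qball X d x r \<subseteq> U))"
    unfolding istopology_def
  proof (rule conjI; intro allI impI)
    fix S T
    assume S: "S \<subseteq> X \<and> (\<forall>x\<in>S. \<exists>r>0. qball X d x r \<subseteq> S)"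
      and T: "T \<subseteq> X \<and> (\<forall>x\<in>T. \<exists>r>0. qball X d x r \<subseteq> T)"
    have "\<exists>r>0. qball X d x r \<subseteq> S \<inter> T" if "x \<in> S \<inter> T" for x
    proof -
      from S T that obtain r s where "r > 0" "qball X d x r \<subseteq> S" "s > 0" "qball X d x s \<subseteq> T"
        by blast
      then show ?thesis by (intro exI[of _ "min r s"]) (auto simp: qball_def)
    qed
    with S show "S \<inter> T \<subseteq> X \<and> (\<forall>x\<in>S \<inter> T. \<exists>r>0. qball X d x r \<subseteq> S \<inter> T)"
      by blast
  next
    fix K
    assume "\<forall>U\<in>K. U \<subseteq> X \<and> (\<forall>x\<in>U. \<exists>r>0. qball X d x r \<subseteq> U)"
    then show "\<Union>K \<subseteq> X \<and> (\<forall>x\<in>\<Union>K. \<exists>r>0. qball X d x r \<subseteq> \<Union>K)"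
      by (meson Sup_upper Union_least order_trans UnionE)
  qed
  then show ?thesis unfolding qtopology_def by simp
qed

lemma topspace_qtopology: "topspace (qtopology X d) = X"
proof -
  have "openin (qtopology X d) X"
    unfolding openin_qtopology by (auto simp: qball_def intro: exI[of _ 1])
  moreover have "U \<subseteq> X" if "openin (qtopology X d) U" for U
    using that unfolding openin_qtopology by blast
  ultimately show ?thesis
    unfolding topspace_def by blast
qed

lemma t1_space_qtopology_dist_zero_imp_eq:
  assumes "t1_space (qtopology X d)" "x \<in> X" "y \<in> X" "d x y = 0"
  shows "x = y"
proof (rule ccontr)
  assume "x \<noteq> y"
  with assms(1-3) obtain U where U: "openin (qtopology X d) U" "x \<in> U" "y \<notin> U"
    unfolding t1_space_def topspace_qtopology by blast
  then obtain r where "r > 0" "qball X d x r \<subseteq> U"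
    unfolding openin_qtopology by blast
  with assms(3,4) U(3) show False by (auto simp: qball_def)
qed

lemma nearly_lsc_at_iff_no_const_subseq:
  "nearly_lsc_at X d f x \<longleftrightarrow>
     (\<forall>xs. (\<forall>n. xs n \<in> X) \<longrightarrow> \<not> has_const_subseq xs \<longrightarrow> qconv d xs x
          \<longrightarrow> f x \<le> liminf (\<lambda>n. f (xs n)))"
proof
  assume nearly: "nearly_lsc_at X d f x"
  show "\<forall>xs. (\<forall>n. xs n \<in> X) \<longrightarrow> \<not> has_const_subseq xs \<longrightarrow> qconv d xs x
          \<longrightarrow> f x \<le> liminf (\<lambda>n. f (xs n))"
  proof (intro allI impI)
    fix xs assume xs: "\<forall>n. xs n \<in> X" "\<not> has_const_subseq xs" "qconv d xs x"
    from xs(2) have "\<And>v. infinite {n. xs n = v} \<Longrightarrow> f x \<le> f v"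
      unfolding has_const_subseq_iff_infinite_fiber by blast
    with nearly xs(1,3) show "f x \<le> liminf (\<lambda>n. f (xs n))"
      by (rule nearly_lsc_at_le_liminf)
  qed
next
  assume "\<forall>xs. (\<forall>n. xs n \<in> X) \<longrightarrow> \<not> has_const_subseq xs \<longrightarrow> qconv d xs x
          \<longrightarrow> f x \<le> liminf (\<lambda>n. f (xs n))"
  with inj_imp_not_has_const_subseq show "nearly_lsc_at X d f x"
    unfolding nearly_lsc_at_def by blast
qed

lemma lsc_on_iff_nearly_lsc_on_d_monotone:
  "lsc_on X d f \<longleftrightarrow> nearly_lsc_on X d f \<and> d_monotone X d f"
  unfolding lsc_on_def nearly_lsc_on_def d_monotone_def lsc_at_iff_nearly_lsc_at
  by (simp add: ball_conj_distrib)

lemma t1_space_qtopology_imp_d_monotone: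
  assumes "t1_space (qtopology X d)"
  shows "d_monotone X d f"
  unfolding d_monotone_def
  using t1_space_qtopology_dist_zero_imp_eq[OF assms] by (metis order.refl)

theorem proposition2p11:
  fixes X :: "'a set" and d :: "'a \<Rightarrow> 'a \<Rightarrow> real" and f :: "'a \<Rightarrow> ereal"
  assumes "quasi_pseudometric X d"
    and "\<forall>x\<in>X. f x \<noteq> -\<infinity>"
  shows "(\<forall>x\<in>X. nearly_lsc_at X d f x \<longleftrightarrow>
            (\<forall>xs. (\<forall>n. xs n \<in> X) \<longrightarrow> \<not> has_const_subseq xs \<longrightarrow> qconv d xs x
                 \<longrightarrow> f x \<le> liminf (\<lambda>n. f (xs n))))
      \<and> (lsc_on X d f \<longleftrightarrow> nearly_lsc_on X d f \<and> d_monotone X d f)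
      \<and> (t1_space (qtopology X d) \<longrightarrow> nearly_lsc_on X d f \<longrightarrow> lsc_on X d f)"
  by (simp add: nearly_lsc_at_iff_no_const_subseq lsc_on_iff_nearly_lsc_on_d_monotone
      t1_space_qtopology_imp_d_monotone)

end
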